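(* Let $1\le K<d$ be integers and $T_\lambda$ as below. There exists $\bar\lambda<1$ such that for all $\lambda\in(\bar\lambda,1)$ the equation $T_\lambda(u)=u$ has a solution in $(1,\infty)$. Letting $u_\lambda$ denote the minimal solution in $[1,\infty)$ for $\lambda\in(\bar\lambda,1)$: (a) $\lim_{\lambda\to1^-}u_\lambda=1$; (b) with $h_\lambda(x)=\frac{u_\lambda-T_\lambda(u_\lambda-x)}{x}$, we have $\lim_{\varepsilon\to0^+}\lim_{\lambda\to1^-}h_\lambda(\varepsilon)=\frac dK$.
   Context: $T_\lambda(u)=\frac{\lambda}{K}\sum_{j=0}^{K-1}(K-j)\binom{d}{j}u^{d-j}(1-u)^j$ for $u\in[0,\infty)$, $\lambda\in(0,1)$. *)

theory Defs
  imports "HOL-Analysis.Analysis"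
begin

definition T :: "nat \<Rightarrow> nat \<Rightarrow> real \<Rightarrow> real \<Rightarrow> real" where
  "T d K l u = l / real K *
     (\<Sum>j<K. real (K - j) * real (d choose j) * u ^ (d - j) * (1 - u) ^ j)"

definition u_min :: "nat \<Rightarrow> nat \<Rightarrow> real \<Rightarrow> real" where
  "u_min d K l = (LEAST u. 1 \<le> u \<and> T d K l u = u)"

definition h :: "nat \<Rightarrow> nat \<Rightarrow> real \<Rightarrow> real \<Rightarrow> real" where
  "h d K l x = (u_min d K l - T d K l (u_min d K l - x)) / x"

end

theory Submission imports Defs begin

text \<open>
  \<open>T\<^sub>\<lambda> = \<lambda> T\<^sub>1\<close>, \<open>T\<^sub>1(1) = 1\<close> and \<open>T\<^sub>1'(1) = d/K > 1\<close>, so \<open>T\<^sub>1\<close> lies strictly above the diagonal on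
  some interval \<open>(1, 1 + \<delta>)\<close>. For \<open>v\<close> in that interval and \<open>\<lambda>\<close> close enough to \<open>1\<close> we still have
  \<open>T\<^sub>\<lambda>(v) > v\<close>, while \<open>T\<^sub>\<lambda>(1) = \<lambda> < 1\<close>; by the intermediate value theorem \<open>T\<^sub>\<lambda>\<close> has a fixed
  point in \<open>(1, v]\<close>, hence \<open>1 < u\<^sub>\<lambda> \<le> v\<close>, which gives (a). By continuity,
  \<open>h\<^sub>\<lambda>(\<epsilon>) \<rightarrow> (1 - T\<^sub>1(1 - \<epsilon>))/\<epsilon>\<close> as \<open>\<lambda> \<rightarrow> 1\<close>, a difference quotient of \<open>T\<^sub>1\<close> at \<open>1\<close>, whose
  limit as \<open>\<epsilon> \<rightarrow> 0\<^sup>+\<close> is \<open>T\<^sub>1'(1) = d/K\<close>.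
\<close>

lemma T_eq_scale: "T d K l u = l * T d K 1 u"
  unfolding T_def by simp

lemma T_at_1:
  assumes "1 \<le> K"
  shows "T d K l 1 = l"
proof -
  have "(\<Sum>j<K. real (K - j) * real (d choose j) * 1 ^ (d - j) * (1 - (1::real)) ^ j)
      = (\<Sum>j<K. if j = 0 then real K else 0)"
    by (rule sum.cong) auto
  also have "\<dots> = real K"
    using assms by simp
  finally show ?thesis
    unfolding T_def using assms by simp
qed

lemma continuous_on_T: "continuous_on A (T d K l)"
  unfolding T_def by (intro continuous_intros)

lemma T_has_real_derivative:
  assumes "1 \<le> K"
  shows "(T d K 1 has_real_derivative (1 / real K *
     (\<Sum>j<K. real (K - j) * real (d choose j) *
        (real (d - j) * u ^ (d - j - 1) * (1 - u) ^ j - u ^ (d - j) * (real j * (1 - u) ^ (j - 1))))))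
   (at u)"
  unfolding T_def using assms by (auto intro!: derivative_eq_intros simp: algebra_simps)

text \<open>At \<open>u = 1\<close> only the terms \<open>j = 0\<close> (contributing \<open>K d\<close>) and \<open>j = 1\<close> (contributing
  \<open>-(K - 1) d\<close>) survive.\<close>

lemma T_has_real_derivative_at_1:
  assumes "1 \<le> K" "K < d"
  shows "(T d K 1 has_real_derivative real d / real K) (at 1)"
proof -
  let ?f = "\<lambda>j. real (K - j) * real (d choose j) *
      (real (d - j) * (1::real) ^ (d - j - 1) * (1 - 1) ^ j - 1 ^ (d - j) * (real j * (1 - 1) ^ (j - 1)))"
  have "(\<Sum>j<K. ?f j) =
      (\<Sum>j<K. if j = 0 then real K * real d else if j = 1 then - (real K - 1) * real d else 0)"
    using assms by (intro sum.cong) (auto simp: of_nat_diff power_0_left algebra_simps)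
  also have "\<dots> = real d"
  proof (cases "K = 1")
    case False
    then have "{..<K} = {0, 1} \<union> {2..<K}"
      using assms by auto
    then show ?thesis
      using False by (simp add: sum.union_disjoint algebra_simps)
  qed simp
  finally show ?thesis
    using T_has_real_derivative[OF assms(1), of d 1] by simp
qed

lemma has_real_derivative_imp_left_quotient_tendsto:
  assumes "(f has_real_derivative D) (at x)"
  shows "((\<lambda>e. (f x - f (x - e)) / e) \<longlongrightarrow> D) (at_right 0)"
proof -
  have "((\<lambda>e. f (- e)) has_real_derivative - D) (at (- x))"
    using DERIV_mirror[of f D "- x"] assms by simp
  then have "((\<lambda>e. (f (x - e) - f x) / e) \<longlongrightarrow> - D) (at 0)"
    by (simp add: DERIV_def)
  then have "((\<lambda>e. - ((f (x - e) - f x) / e)) \<longlongrightarrow> D) (at 0)"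
    using tendsto_minus by fastforce
  then show ?thesis
    by (simp add: minus_divide_left tendsto_mono[OF at_within_le_at])
qed

lemma Least_mem_eq_Inf_closed:
  fixes S :: "real set"
  assumes "closed S" "S \<noteq> {}" "bdd_below S"
  shows "(LEAST x. x \<in> S) = Inf S"
proof (rule Least_equality)
  show "Inf S \<in> S"
    using closed_contains_Inf assms by blast
qed (use assms in \<open>auto intro: cInf_lower\<close>)

lemma T1_above_diagonal_right_of_1:
  assumes "1 \<le> K" "K < d"
  obtains \<delta> :: real where "\<delta> > 0" "\<And>u. 1 < u \<Longrightarrow> u < 1 + \<delta> \<Longrightarrow> u < T d K 1 u"
proof -
  have "DERIV (\<lambda>u. T d K 1 u - u) 1 :> real d / real K - 1"
    by (intro derivative_intros T_has_real_derivative_at_1[OF assms])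
  moreover have "real d / real K - 1 > 0"
    using assms by (simp add: field_simps)
  ultimately obtain \<delta> where "\<delta> > 0"
    and inc: "\<And>e. e > 0 \<Longrightarrow> e < \<delta> \<Longrightarrow> T d K 1 1 - 1 < T d K 1 (1 + e) - (1 + e)"
    using DERIV_pos_inc_right by blast
  moreover have "u < T d K 1 u" if "1 < u" "u < 1 + \<delta>" for u
    using inc[of "u - 1"] that T_at_1[OF assms(1), of d 1] by simp
  ultimately show thesis
    using that by blast
qed

lemma T_above_diagonal_near_1:
  assumes "1 < v" "v < T d K 1 v"
  shows "\<forall>\<^sub>F l in at_left 1. v < T d K l v"
proof -
  have "v / T d K 1 v < 1"
    using assms by (simp add: field_simps)
  moreover have "v < T d K l v" if "v / T d K 1 v < l" for l
    using that assms by (simp add: T_eq_scale[of d K l] field_simps)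
  ultimately show ?thesis
    unfolding eventually_at_left_field by blast
qed

lemma u_min_fixed_point:
  assumes K: "1 \<le> K" and "l < 1" and v: "1 < v" "v < T d K l v"
  shows "1 < u_min d K l" "u_min d K l \<le> v" "T d K l (u_min d K l) = u_min d K l"
proof -
  define S where "S = {u. 1 \<le> u \<and> T d K l u = u}"
  have "\<exists>x\<ge>1. x \<le> v \<and> T d K l x - x = 0"
    by (rule IVT') (use T_at_1[OF K] \<open>l < 1\<close> v in \<open>auto intro!: continuous_intros continuous_on_T\<close>)
  then obtain x where x: "x \<in> S" "x \<le> v"
    unfolding S_def by auto
  have "closed S"
    unfolding S_def
    by (intro closed_Collect_conj closed_Collect_le closed_Collect_eq continuous_on_T continuous_intros)
  moreover have "bdd_below S"
    unfolding S_def bdd_below_def by auto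
  ultimately have u_min: "u_min d K l = Inf S" "Inf S \<in> S" "Inf S \<le> x"
    using Least_mem_eq_Inf_closed[of S] closed_contains_Inf[of S] cInf_lower[of x S] x
    unfolding u_min_def S_def by auto
  then show "T d K l (u_min d K l) = u_min d K l" "u_min d K l \<le> v"
    using x unfolding S_def by auto
  moreover have "u_min d K l \<noteq> 1"
    using u_min T_at_1[OF K, of d l] \<open>l < 1\<close> unfolding S_def by auto
  ultimately show "1 < u_min d K l"
    using u_min unfolding S_def by auto
qed

lemma tendsto_u_min:
  assumes "1 \<le> K" "K < d"
  shows "(u_min d K \<longlongrightarrow> 1) (at_left 1)"
proof (rule tendstoI)
  fix e :: real
  assume "e > 0"
  obtain \<delta> where \<delta>: "\<delta> > 0" "\<And>u. 1 < u \<Longrightarrow> u < 1 + \<delta> \<Longrightarrow> u < T d K 1 u"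
    using T1_above_diagonal_right_of_1[OF assms] by blast
  define v where "v = 1 + min \<delta> e / 2"
  have v: "1 < v" "v < T d K 1 v" "v < 1 + e"
    using \<delta> \<open>e > 0\<close> unfolding v_def by auto
  show "\<forall>\<^sub>F l in at_left 1. dist (u_min d K l) 1 < e"
    using T_above_diagonal_near_1[OF v(1,2)] eventually_at_left_real[OF zero_less_one]
  proof eventually_elim
    case (elim l)
    then show ?case
      using u_min_fixed_point[OF assms(1), where l = l and v = v and d = d] v by (auto simp: dist_real_def)
  qed
qed

lemma tendsto_h:
  assumes "1 \<le> K" "K < d" "e > 0"
  shows "((\<lambda>l. h d K l e) \<longlongrightarrow> (1 - T d K 1 (1 - e)) / e) (at_left 1)"
proof -
  have "((\<lambda>l. T d K 1 (u_min d K l - e)) \<longlongrightarrow> T d K 1 (1 - e)) (at_left 1)"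
    using continuous_on_T[of UNIV d K 1] tendsto_u_min[OF assms(1,2)]
    by (intro isCont_tendsto_compose[of _ "T d K 1"] tendsto_intros)
      (auto simp: continuous_on_eq_continuous_at)
  then have "((\<lambda>l. (u_min d K l - l * T d K 1 (u_min d K l - e)) / e)
      \<longlongrightarrow> (1 - 1 * T d K 1 (1 - e)) / e) (at_left 1)"
    using assms by (intro tendsto_intros tendsto_u_min) auto
  then show ?thesis
    unfolding h_def by (subst T_eq_scale) simp
qed

theorem lemma3p4:
  fixes d K :: nat
  assumes "1 \<le> K" and "K < d"
  shows "\<exists>lbar < 1.
     (\<forall>l. lbar < l \<and> l < 1 \<longrightarrow> (\<exists>u > 1. T d K l u = u)) \<and>
     ((u_min d K \<longlongrightarrow> 1) (at_left 1)) \<and>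
     (\<exists>g :: real \<Rightarrow> real.
        (\<forall>\<^sub>F e in at_right 0. ((\<lambda>l. h d K l e) \<longlongrightarrow> g e) (at_left 1)) \<and>
        (g \<longlongrightarrow> real d / real K) (at_right 0))"
proof -
  obtain \<delta> where \<delta>: "\<delta> > 0" "\<And>u. 1 < u \<Longrightarrow> u < 1 + \<delta> \<Longrightarrow> u < T d K 1 u"
    using T1_above_diagonal_right_of_1[OF assms] by blast
  define v where "v = 1 + \<delta> / 2"
  have v: "1 < v" "v < T d K 1 v"
    using \<delta> unfolding v_def by auto
  obtain lbar where "lbar < 1" and lbar: "\<And>l. lbar < l \<Longrightarrow> l < 1 \<Longrightarrow> v < T d K l v"
    using T_above_diagonal_near_1[OF v] unfolding eventually_at_left_field by blast
  have "\<exists>u > 1. T d K l u = u" if "lbar < l" "l < 1" for l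
    using u_min_fixed_point[OF assms(1) \<open>l < 1\<close> v(1) lbar[OF that]] by blast
  moreover have "\<forall>\<^sub>F e in at_right 0.
      ((\<lambda>l. h d K l e) \<longlongrightarrow> (1 - T d K 1 (1 - e)) / e) (at_left 1)"
    using eventually_at_right_real[OF zero_less_one] by eventually_elim (auto intro: tendsto_h[OF assms])
  moreover have "((\<lambda>e. (1 - T d K 1 (1 - e)) / e) \<longlongrightarrow> real d / real K) (at_right 0)"
    using has_real_derivative_imp_left_quotient_tendsto[OF T_has_real_derivative_at_1[OF assms]]
    by (simp add: T_at_1[OF assms(1)])
  ultimately show ?thesis
    using \<open>lbar < 1\<close> tendsto_u_min[OF assms]
    by (intro exI[of _ lbar] conjI exI[of _ "\<lambda>e. (1 - T d K 1 (1 - e)) / e"]) auto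
qed

end
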